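(* For every integer $n\ge 2$, $F_{2 n-1} F_{n-2}^3+F_n (F_n F_{n+2}-F_{2 n}) F_{2 n+1}= F_{n-2}\left(F_n^2 (F_{2 n-1}+F_{2 n+1})-F_{2 n-2} F_{2 n-1}\right)$, where $F_k$ denotes the $k$-th Fibonacci number.
   Context: The Fibonacci numbers are defined by $F_0=0$, $F_1=1$, $F_k=F_{k-1}+F_{k-2}$ for $k\ge 2$. *)

theory Defs
  imports "HOL-Number_Theory.Fib"
begin

end

theory Submission
  imports Defs
begin

text \<open>Put \<open>a = F(n-2)\<close> and \<open>b = F(n-1)\<close>. The recurrence and the doubling formulas
  \<open>F(2k+1) = F(k)\<^sup>2 + F(k+1)\<^sup>2\<close> and \<open>F(2k) = (F(k-1) + F(k+1)) F(k)\<close> express every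
  Fibonacci number in the identity as a polynomial in \<open>a\<close> and \<open>b\<close>, and the identity becomes
  a polynomial identity that holds in every commutative ring.\<close>

lemma proposition7p2_polynomial_identity:
  fixes a b :: "'a::comm_ring_1"
  defines "p \<equiv> a + b"
  shows "(b\<^sup>2 + p\<^sup>2) * a ^ 3 + p * (p * (2*a + 3*b) - p * (a + 3*b)) * (p\<^sup>2 + (a + 2*b)\<^sup>2)
       = a * (p\<^sup>2 * ((b\<^sup>2 + p\<^sup>2) + (p\<^sup>2 + (a + 2*b)\<^sup>2)) - b * (2*a + b) * (b\<^sup>2 + p\<^sup>2))"
  unfolding p_def by (simp add: algebra_simps power2_eq_square power3_eq_cube)

theorem proposition7p2:
  fixes n :: nat
  assumes "n \<ge> 2"
  shows "int (fib (2*n - 1)) * int (fib (n - 2)) ^ 3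
           + int (fib n) * (int (fib n) * int (fib (n + 2)) - int (fib (2*n))) * int (fib (2*n + 1))
         = int (fib (n - 2)) * (int (fib n) ^ 2 * (int (fib (2*n - 1)) + int (fib (2*n + 1)))
           - int (fib (2*n - 2)) * int (fib (2*n - 1)))"
proof -
  obtain m where n: "n = m + 2"
    using assms le_Suc_ex by (metis add.commute)
  define a where "a = int (fib m)"
  define b where "b = int (fib (m + 1))"
  have shifts: "int (fib (n - 2)) = a" "int (fib n) = a + b" "int (fib (n + 2)) = 2*a + 3*b"
    by (simp_all add: n a_def b_def numeral_eq_Suc)
  have "fib (2*n - 2) = (fib m + fib (m + 2)) * fib (m + 1)"
      "fib (2*n - 1) = fib (m + 1) ^ 2 + fib (m + 2) ^ 2"
      "fib (2*n) = (fib (m + 1) + fib (m + 3)) * fib (m + 2)"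
      "fib (2*n + 1) = fib (m + 2) ^ 2 + fib (m + 3) ^ 2"
    using fib_rec_even[of "m + 1"] fib_rec_odd[of "m + 1"]
      fib_rec_even[of "m + 2"] fib_rec_odd[of "m + 2"]
    by (simp_all add: n numeral_3_eq_3 del: fib.simps)
  then have doubles: "int (fib (2*n - 2)) = b * (2*a + b)" "int (fib (2*n - 1)) = b\<^sup>2 + (a + b)\<^sup>2"
      "int (fib (2*n)) = (a + b) * (a + 3*b)" "int (fib (2*n + 1)) = (a + b)\<^sup>2 + (a + 2*b)\<^sup>2"
    by (simp_all add: a_def b_def numeral_eq_Suc algebra_simps)
  show ?thesis
    unfolding shifts doubles by (rule proposition7p2_polynomial_identity)
qed

end
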